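(* Let $3\le w<n$ and suppose a Steiner system $S(3,w,n)$ exists. Then $$q'_0(3,w,n)=\min_{S}\ \max_{D\in S'}\ \chi(D)+1,$$ where the minimum is over all Steiner systems $S$ of type $S(3,w,n)$ and, for each such $S$, $S'$ denotes the set of all $S(2,w-1,n-1)$ systems derived from $S$ (one for each point of $S$).
   Context: $\mathbb{Z}_q=\{0,\dots,q-1\}$ (an alphabet); $\mathrm{wt}$ = number of nonzero coordinates; $d$ = Hamming distance; $J_q(n,w)$ = weight-$w$ words of $\mathbb{Z}_q^n$. An $(n,w,d)_q$ code of size $M$ is a subset $C\subseteq J_q(n,w)$ with $|C|=M$ and pairwise distances at least $d$. A Steiner system $S(t,k,n)$ is a pair $(N,B)$, $|N|=n$, $B$ a set of $k$-subsets (blocks) of $N$ with every $t$-subset of $N$ in exactly one block. For $\alpha\subset N$ with $0<|\alpha|<t$, the derived system is $(N\setminus\alpha,\{\beta\setminus\alpha:\alpha\subseteq\beta\in B\})$, an $S(t-|\alpha|,k-|\alpha|,n-|\alpha|)$. For a Steiner system $S(t,k,n)$, $\chi(S)$ is the minimum number of classes in a partition of its block set such that any two distinct blocks in the same class intersect in at most $t-2$ points (chromatic number of the graph on blocks where two blocks are adjacent iff they share exactly $t-1$ points); for $t=2$ this means blocks in the same class are pairwise disjoint. For $t,k,n$ such that an $S(t,k,n)$ exists, $q'_0(t,k,n)$ is the smallest $q$ for which an $(n,k,2k-t+1)_q$ code of size $\binom{n}{t}/\binom{k}{t}$ exists. *)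

theory Defs
  imports Main
begin

definition wt :: "nat list \<Rightarrow> nat" where
  "wt x = card {i. i < length x \<and> x ! i \<noteq> 0}"

definition hdist :: "nat list \<Rightarrow> nat list \<Rightarrow> nat" where
  "hdist x y = card {i. i < length x \<and> x ! i \<noteq> y ! i}"

definition J :: "nat \<Rightarrow> nat \<Rightarrow> nat \<Rightarrow> nat list set" where
  "J q n w = {x. length x = n \<and> set x \<subseteq> {0..<q} \<and> wt x = w}"

definition is_code :: "nat \<Rightarrow> nat \<Rightarrow> nat \<Rightarrow> nat \<Rightarrow> nat \<Rightarrow> nat list set \<Rightarrow> bool" where
  "is_code q n w d M C \<longleftrightarrow> C \<subseteq> J q n w \<and> finite C \<and> card C = M \<and>
     (\<forall>x\<in>C. \<forall>y\<in>C. x \<noteq> y \<longrightarrow> d \<le> hdist x y)"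

definition steiner :: "nat \<Rightarrow> nat \<Rightarrow> nat \<Rightarrow> 'a set \<Rightarrow> 'a set set \<Rightarrow> bool" where
  "steiner t k n N B \<longleftrightarrow> finite N \<and> card N = n \<and>
     (\<forall>b\<in>B. b \<subseteq> N \<and> card b = k) \<and>
     (\<forall>T. T \<subseteq> N \<and> card T = t \<longrightarrow> (\<exists>!b. b \<in> B \<and> T \<subseteq> b))"

definition derived_blocks :: "'a set set \<Rightarrow> 'a \<Rightarrow> 'a set set" where
  "derived_blocks B x = {b - {x} | b. b \<in> B \<and> x \<in> b}"

definition chi :: "nat \<Rightarrow> 'a set set \<Rightarrow> nat" where
  "chi t B = (LEAST m. \<exists>f :: 'a set \<Rightarrow> nat. (\<forall>b\<in>B. f b < m) \<and>
      (\<forall>b\<in>B. \<forall>b'\<in>B. b \<noteq> b' \<and> f b = f b' \<longrightarrow> card (b \<inter> b') \<le> t - 2))"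

definition q0' :: "nat \<Rightarrow> nat \<Rightarrow> nat \<Rightarrow> nat" where
  "q0' t k n = (LEAST q. \<exists>C. is_code q n k (2 * k - t + 1) ((n choose t) div (k choose t)) C)"

end

theory Submission
  imports Defs
begin

text \<open>For weight-\<open>w\<close> words, distance at least \<open>2w - 2\<close> means: the supports meet in at
  most two points, and where they meet in exactly two points the words differ at both.
  Hence the supports of a code with \<open>(n choose 3) / (w choose 3)\<close> words form
  an \<open>S(3,w,n)\<close>, and at every point \<open>p\<close> the nonzero entries at \<open>p\<close> properly colour the
  derived \<open>S(2,w-1,n-1)\<close> with \<open>q - 1\<close> colours. Conversely, given an \<open>S(3,w,n)\<close> and a
  proper colouring of each derived system, the words carrying at each point of a block one plus
  the colour of the derived block there form such a code.\<close>

section \<open>Colourings of block sets\<close>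

definition block_colouring :: "nat \<Rightarrow> 'a set set \<Rightarrow> nat \<Rightarrow> ('a set \<Rightarrow> nat) \<Rightarrow> bool" where
  "block_colouring t D m f \<longleftrightarrow> (\<forall>b\<in>D. f b < m) \<and>
     (\<forall>b\<in>D. \<forall>b'\<in>D. b \<noteq> b' \<and> f b = f b' \<longrightarrow> card (b \<inter> b') \<le> t - 2)"

lemma chi_eq_Least: "chi t D = (LEAST m. \<exists>f. block_colouring t D m f)"
  unfolding chi_def block_colouring_def ..

lemma chi_le: "block_colouring t D m f \<Longrightarrow> chi t D \<le> m"
  unfolding chi_eq_Least by (blast intro: Least_le)

lemma block_colouring_chi:
  assumes "finite D"
  obtains f :: "'a set \<Rightarrow> nat" where "block_colouring t D (chi t D) f"
proof -
  obtain f :: "'a set \<Rightarrow> nat" and m where "f ` D = {i. i < m}" "inj_on f D"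
    using finite_imp_inj_to_nat_seg[OF assms] by blast
  then have "block_colouring t D m f"
    unfolding block_colouring_def by (auto simp: inj_on_def)
  then have "\<exists>m f. block_colouring t D m f"
    by blast
  then have "\<exists>f. block_colouring t D (chi t D) f"
    unfolding chi_eq_Least by (rule LeastI_ex)
  with that show ?thesis by blast
qed

section \<open>Packings and Steiner systems\<close>

lemma steiner_blocks:
  assumes "steiner t k n N B"
  shows "finite N" "card N = n" "b \<in> B \<Longrightarrow> b \<subseteq> N" "b \<in> B \<Longrightarrow> card b = k"
  using assms unfolding steiner_def by auto

lemma steiner_covers:
  assumes "steiner t k n N B" "T \<subseteq> N" "card T = t"
  obtains b where "b \<in> B" "T \<subseteq> b"
proof -
  have "\<exists>!b. b \<in> B \<and> T \<subseteq> b"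
    using assms unfolding steiner_def by simp
  with that show ?thesis by blast
qed

lemma finite_steiner_blocks: "steiner t k n N B \<Longrightarrow> finite B"
  by (metis finite_Pow_iff finite_subset steiner_blocks(1,3) subsetI PowI)

lemma steiner_card_Int_less:
  assumes S: "steiner t k n N B" and "b \<in> B" "b' \<in> B" "b \<noteq> b'"
  shows "card (b \<inter> b') < t"
proof (rule ccontr)
  assume "\<not> ?thesis"
  then obtain T where T: "T \<subseteq> b \<inter> b'" "card T = t"
    by (meson not_less obtain_subset_with_card_n)
  have "T \<subseteq> N"
    using T(1) steiner_blocks(3)[OF S \<open>b \<in> B\<close>] by blast
  then have "\<exists>!c. c \<in> B \<and> T \<subseteq> c"
    using S T(2) unfolding steiner_def by simp
  moreover have "b \<in> B \<and> T \<subseteq> b" "b' \<in> B \<and> T \<subseteq> b'"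
    using assms(2,3) T(1) by auto
  ultimately show False
    using \<open>b \<noteq> b'\<close> by (metis (no_types, lifting))
qed

lemma card_covered_subsets:
  assumes "finite B" and blocks: "\<And>b. b \<in> B \<Longrightarrow> finite b \<and> card b = k"
    and packing: "\<And>b b'. b \<in> B \<Longrightarrow> b' \<in> B \<Longrightarrow> b \<noteq> b' \<Longrightarrow> card (b \<inter> b') < t"
  shows "card (\<Union>b\<in>B. {T. T \<subseteq> b \<and> card T = t}) = card B * (k choose t)"
proof -
  have disjoint: "{T. T \<subseteq> b \<and> card T = t} \<inter> {T. T \<subseteq> b' \<and> card T = t} = {}"
    if "b \<in> B" "b' \<in> B" "b \<noteq> b'" for b b'
  proof -
    have "card T < t" if "T \<subseteq> b \<inter> b'" for T
      using card_mono[OF _ that] blocks[OF \<open>b \<in> B\<close>] packing[OF \<open>b \<in> B\<close> \<open>b' \<in> B\<close> \<open>b \<noteq> b'\<close>]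
      by simp
    then show ?thesis by blast
  qed
  have "card (\<Union>b\<in>B. {T. T \<subseteq> b \<and> card T = t}) = (\<Sum>b\<in>B. card {T. T \<subseteq> b \<and> card T = t})"
  proof (rule card_UN_disjoint)
    show "\<forall>b\<in>B. finite {T. T \<subseteq> b \<and> card T = t}"
      using blocks by simp
  qed (use \<open>finite B\<close> disjoint in blast)+
  also have "\<dots> = card B * (k choose t)"
    using blocks by (simp add: n_subsets)
  finally show ?thesis .
qed

lemma steiner_card_blocks:
  assumes S: "steiner t k n N B"
  shows "card B * (k choose t) = n choose t"
proof -
  note N = steiner_blocks(1,2)[OF S]
  have blocks: "finite b \<and> card b = k" if "b \<in> B" for b
    using steiner_blocks(3,4)[OF S that] N(1) finite_subset by blast
  have "(\<Union>b\<in>B. {T. T \<subseteq> b \<and> card T = t}) = {T. T \<subseteq> N \<and> card T = t}"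
  proof
    show "{T. T \<subseteq> N \<and> card T = t} \<subseteq> (\<Union>b\<in>B. {T. T \<subseteq> b \<and> card T = t})"
    proof
      fix T assume "T \<in> {T. T \<subseteq> N \<and> card T = t}"
      then have "T \<subseteq> N" "card T = t" by simp_all
      moreover obtain b where "b \<in> B" "T \<subseteq> b"
        by (rule steiner_covers[OF S calculation])
      ultimately show "T \<in> (\<Union>b\<in>B. {T. T \<subseteq> b \<and> card T = t})" by blast
    qed
  qed (use steiner_blocks(3)[OF S] in blast)
  moreover have "card (\<Union>b\<in>B. {T. T \<subseteq> b \<and> card T = t}) = card B * (k choose t)"
    using finite_steiner_blocks[OF S] blocks steiner_card_Int_less[OF S]
    by (rule card_covered_subsets)
  ultimately show ?thesis
    using N by (simp add: n_subsets)
qed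

lemma steiner_if_packing:
  assumes N: "finite N" "card N = n" and blocks: "\<And>b. b \<in> B \<Longrightarrow> b \<subseteq> N \<and> card b = k"
    and packing: "\<And>b b'. b \<in> B \<Longrightarrow> b' \<in> B \<Longrightarrow> b \<noteq> b' \<Longrightarrow> card (b \<inter> b') < t"
    and card_B: "card B * (k choose t) = n choose t"
  shows "steiner t k n N B"
proof -
  let ?covered = "\<Union>b\<in>B. {T. T \<subseteq> b \<and> card T = t}"
  have "B \<subseteq> Pow N"
    using blocks by blast
  then have "finite B"
    using N(1) by (simp add: finite_subset)
  moreover have finite_blocks: "finite b \<and> card b = k" if "b \<in> B" for b
    using blocks[OF that] N(1) finite_subset by blast
  ultimately have "card ?covered = card {T. T \<subseteq> N \<and> card T = t}"
    using card_covered_subsets[OF _ _ packing] card_B N by (simp add: n_subsets)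
  moreover have "?covered \<subseteq> {T. T \<subseteq> N \<and> card T = t}"
    using blocks by blast
  ultimately have covered: "?covered = {T. T \<subseteq> N \<and> card T = t}"
    using N(1) by (intro card_subset_eq) simp_all
  have unique: "\<exists>!b. b \<in> B \<and> T \<subseteq> b" if "T \<subseteq> N" "card T = t" for T
  proof -
    have "T \<in> ?covered"
      using that covered by simp
    then obtain b where b: "b \<in> B" "T \<subseteq> b"
      by blast
    have "b' = b" if "b' \<in> B" "T \<subseteq> b'" for b'
    proof (rule ccontr)
      assume "b' \<noteq> b"
      moreover have "card T \<le> card (b' \<inter> b)"
        using b that finite_blocks by (intro card_mono) auto
      ultimately show False
        using packing[OF that(1) b(1)] \<open>card T = t\<close> by simp
    qed
    with b show ?thesis by blast
  qed
  show ?thesis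
    unfolding steiner_def using N blocks unique by simp
qed

lemma card_steiner_blocks_eq:
  assumes "steiner t k n N B" "t \<le> k"
  shows "card B = (n choose t) div (k choose t)"
  using steiner_card_blocks[OF assms(1)] assms(2) by (metis nonzero_mult_div_cancel_right
      binomial_eq_0_iff not_less)

lemma finite_steiner_systems: "finite {B. steiner t k n N B}"
proof (cases "finite N")
  case True
  have "{B. steiner t k n N B} \<subseteq> Pow (Pow N)"
    using steiner_blocks(3) by blast
  with True show ?thesis
    by (simp add: finite_subset)
next
  case False
  then show ?thesis
    unfolding steiner_def by simp
qed

section \<open>Constant-weight words\<close>

definition supp :: "nat list \<Rightarrow> nat set" where
  "supp x = {i. i < length x \<and> x ! i \<noteq> 0}"

lemma J_memD:
  assumes "x \<in> J q n w"
  shows "length x = n" "i < n \<Longrightarrow> x ! i < q" "supp x \<subseteq> {0..<n}" "card (supp x) = w"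
proof -
  show "length x = n" "card (supp x) = w"
    using assms unfolding J_def wt_def supp_def by auto
  show "i < n \<Longrightarrow> x ! i < q"
    using assms nth_mem[of i x] unfolding J_def by fastforce
  show "supp x \<subseteq> {0..<n}"
    using assms unfolding J_def supp_def by auto
qed

lemma finite_supp: "finite (supp x)"
  unfolding supp_def by simp

lemma hdist_constant_weight:
  assumes x: "x \<in> J q n w" and y: "y \<in> J q n w"
  shows "hdist x y + 2 * card (supp x \<inter> supp y) =
    2 * w + card {i \<in> supp x \<inter> supp y. x ! i \<noteq> y ! i}"
proof -
  let ?I = "supp x \<inter> supp y" and ?U = "supp x \<union> supp y"
  have "{i. i < length x \<and> x ! i \<noteq> y ! i} = (?U - ?I) \<union> {i \<in> ?I. x ! i \<noteq> y ! i}"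
    using J_memD(1)[OF x] J_memD(1)[OF y] unfolding supp_def by auto
  then have "hdist x y = card (?U - ?I) + card {i \<in> ?I. x ! i \<noteq> y ! i}"
    unfolding hdist_def by (simp only:) (rule card_Un_disjoint; auto simp: finite_supp)
  moreover have "card (?U - ?I) + card ?I = card ?U"
    using card_Int_Diff[of ?U ?I] by (simp add: finite_supp Int_absorb1 Int_lower1 le_supI1)
  moreover have "card ?U + card ?I = 2 * w"
    using card_Un_Int[OF finite_supp finite_supp, of x y] J_memD(4)[OF x] J_memD(4)[OF y] by simp
  ultimately show ?thesis by linarith
qed

lemma constant_weight_dist_ge_iff:
  assumes x: "x \<in> J q n w" and y: "y \<in> J q n w"
  shows "2 * w - 2 \<le> hdist x y \<longleftrightarrow> card (supp x \<inter> supp y) \<le> 2 \<and>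
    (card (supp x \<inter> supp y) = 2 \<longrightarrow> (\<forall>i \<in> supp x \<inter> supp y. x ! i \<noteq> y ! i))"
proof -
  let ?I = "supp x \<inter> supp y"
  let ?E = "{i \<in> ?I. x ! i \<noteq> y ! i}"
  have "finite ?I" "?E \<subseteq> ?I"
    by (auto simp: finite_supp)
  then have "card ?E \<le> card ?I" and "card ?E = card ?I \<longleftrightarrow> ?E = ?I"
    using card_subset_eq[of ?I ?E] card_mono[of ?I ?E] by auto
  moreover have "?E = ?I \<longleftrightarrow> (\<forall>i \<in> ?I. x ! i \<noteq> y ! i)"
    by blast
  moreover have "card ?I \<le> w"
    using card_mono[OF finite_supp, of ?I x] J_memD(4)[OF x] by simp
  ultimately show ?thesis
    using hdist_constant_weight[OF x y] by auto
qed

section \<open>Codes from Steiner systems and back\<close>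

lemma finite_derived_blocks: "finite B \<Longrightarrow> finite (derived_blocks B x)"
  unfolding derived_blocks_def by simp

lemma code_supp_Int:
  assumes C: "is_code q n w (2 * w - 2) M C" and "x \<in> C" "y \<in> C" "x \<noteq> y"
  shows "card (supp x \<inter> supp y) \<le> 2"
    and "card (supp x \<inter> supp y) = 2 \<Longrightarrow> i \<in> supp x \<inter> supp y \<Longrightarrow> x ! i \<noteq> y ! i"
proof -
  have "x \<in> J q n w" "y \<in> J q n w" "2 * w - 2 \<le> hdist x y"
    using C assms(2-4) unfolding is_code_def by auto
  then show "card (supp x \<inter> supp y) \<le> 2"
    and "card (supp x \<inter> supp y) = 2 \<Longrightarrow> i \<in> supp x \<inter> supp y \<Longrightarrow> x ! i \<noteq> y ! i"
    using constant_weight_dist_ge_iff by blast+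
qed

lemma inj_on_supp_code:
  assumes "3 \<le> w" and C: "is_code q n w (2 * w - 2) M C"
  shows "inj_on supp C"
proof (rule inj_onI, rule ccontr)
  fix x y assume "x \<in> C" "y \<in> C" "supp x = supp y" "x \<noteq> y"
  moreover have "card (supp x) = w"
    using C \<open>x \<in> C\<close> J_memD(4) unfolding is_code_def by blast
  ultimately show False
    using code_supp_Int(1)[OF C] \<open>3 \<le> w\<close> by fastforce
qed

lemma steiner_of_code:
  assumes "3 \<le> w" and C: "is_code q n w (2 * w - 2) M C"
    and M: "M * (w choose 3) = n choose 3"
  shows "steiner 3 w n {0..<n} (supp ` C)"
proof (rule steiner_if_packing)
  show "b \<subseteq> {0..<n} \<and> card b = w" if "b \<in> supp ` C" for b
    using that C J_memD(3,4) unfolding is_code_def by blast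
  show "card (b \<inter> b') < 3" if "b \<in> supp ` C" "b' \<in> supp ` C" "b \<noteq> b'" for b b'
    using that code_supp_Int(1)[OF C] by fastforce
  have "card C = M"
    using C unfolding is_code_def by simp
  then show "card (supp ` C) * (w choose 3) = n choose 3"
    using M card_image[OF inj_on_supp_code[OF assms(1,2)]] by simp
qed simp_all

lemma derived_blocks_supp_code:
  assumes "inj_on supp C" "d \<in> derived_blocks (supp ` C) p"
  obtains x where "x \<in> C" "p \<in> supp x" "d = supp x - {p}"
    "the_inv_into C supp (insert p d) = x"
proof -
  obtain x where x: "x \<in> C" "p \<in> supp x" "d = supp x - {p}"
    using assms(2) unfolding derived_blocks_def by blast
  then have "insert p d = supp x" by blast
  with x the_inv_into_f_f[OF assms(1)] that show ?thesis by simp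
qed

text \<open>Two codewords whose supports contain \<open>p\<close> and one more common point differ at \<open>p\<close>,
  so the entry at \<open>p\<close> (shifted down by one, as it is nonzero) colours the derived system.\<close>

lemma block_colouring_code_entries:
  assumes "3 \<le> w" and C: "is_code q n w (2 * w - 2) M C"
  shows "block_colouring 2 (derived_blocks (supp ` C) p) (q - 1)
    (\<lambda>d. the_inv_into C supp (insert p d) ! p - 1)"
    (is "block_colouring 2 ?D (q - 1) ?f")
proof -
  note inj = inj_on_supp_code[OF assms]
  have entry: "0 < x ! i \<and> x ! i < q" if "x \<in> C" "i \<in> supp x" for x i
    using that C J_memD(2,3) unfolding is_code_def supp_def by fastforce
  show ?thesis
    unfolding block_colouring_def
  proof (intro conjI ballI impI)
    fix d assume "d \<in> ?D"
    then obtain x where "x \<in> C" "p \<in> supp x" "?f d = x ! p - 1"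
      by (rule derived_blocks_supp_code[OF inj]) simp
    with entry show "?f d < q - 1" by fastforce
  next
    fix d d' assume "d \<in> ?D" "d' \<in> ?D" and same: "d \<noteq> d' \<and> ?f d = ?f d'"
    then obtain x y where x: "x \<in> C" "p \<in> supp x" "d = supp x - {p}" "?f d = x ! p - 1"
      and y: "y \<in> C" "p \<in> supp y" "d' = supp y - {p}" "?f d' = y ! p - 1"
      by (metis derived_blocks_supp_code[OF inj])
    have "x ! p - 1 = y ! p - 1"
      using same x(4) y(4) by simp
    then have "x ! p = y ! p"
      using entry[OF x(1,2)] entry[OF y(1,2)] by linarith
    have "x \<noteq> y"
      using x y same by blast
    show "card (d \<inter> d') \<le> 2 - 2"
    proof (rule ccontr)
      assume "\<not> ?thesis"
      then obtain j where j: "j \<in> d \<inter> d'"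
        by (metis all_not_in_conv card.empty diff_self_eq_0 order_refl)
      then have "{p, j} \<subseteq> supp x \<inter> supp y" "p \<noteq> j"
        using x y by auto
      then have "2 \<le> card (supp x \<inter> supp y)"
        using card_mono[OF _ \<open>{p, j} \<subseteq> _\<close>] finite_supp by fastforce
      then show False
        using code_supp_Int[OF C x(1) y(1) \<open>x \<noteq> y\<close>] x(2) y(2) \<open>x ! p = y ! p\<close> by fastforce
    qed
  qed
qed

lemma chi_derived_blocks_code_less:
  assumes "3 \<le> w" and C: "is_code q n w (2 * w - 2) M C" and "C \<noteq> {}"
  shows "chi 2 (derived_blocks (supp ` C) p) < q"
proof -
  obtain x where x: "x \<in> C" "x \<in> J q n w"
    using \<open>C \<noteq> {}\<close> C unfolding is_code_def by blast
  then obtain i where "i \<in> supp x"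
    using J_memD(4) \<open>3 \<le> w\<close> by fastforce
  then have "0 < q"
    using x J_memD(2,3) by fastforce
  moreover have "chi 2 (derived_blocks (supp ` C) p) \<le> q - 1"
    using block_colouring_code_entries[OF assms(1,2)] by (rule chi_le)
  ultimately show ?thesis by linarith
qed

definition block_word :: "(nat \<Rightarrow> nat set \<Rightarrow> nat) \<Rightarrow> nat \<Rightarrow> nat set \<Rightarrow> nat list" where
  "block_word F n b = map (\<lambda>i. if i \<in> b then Suc (F i (b - {i})) else 0) [0..<n]"

lemma length_block_word [simp]: "length (block_word F n b) = n"
  unfolding block_word_def by simp

lemma nth_block_word: "i < n \<Longrightarrow> block_word F n b ! i = (if i \<in> b then Suc (F i (b - {i})) else 0)"
  unfolding block_word_def by simp

lemma supp_block_word: "b \<subseteq> {0..<n} \<Longrightarrow> supp (block_word F n b) = b"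
  unfolding supp_def by (auto simp: nth_block_word split: if_splits)

text \<open>Blocks meeting in \<open>{i, j}\<close> give derived blocks at \<open>i\<close> meeting in the single point \<open>j\<close>.\<close>

lemma block_word_nth_neq:
  assumes F: "block_colouring 2 (derived_blocks B i) m (F i)"
    and "b \<in> B" "b' \<in> B" "b \<noteq> b'" "b \<subseteq> {0..<n}"
    and meet: "card (b \<inter> b') = 2" and i: "i \<in> b \<inter> b'"
  shows "block_word F n b ! i \<noteq> block_word F n b' ! i"
proof -
  have distinct: "b - {i} \<noteq> b' - {i}"
    using i \<open>b \<noteq> b'\<close> by blast
  have "finite (b \<inter> b')"
    using \<open>b \<subseteq> {0..<n}\<close> by (simp add: finite_subset)
  then have meet_one: "card ((b - {i}) \<inter> (b' - {i})) = 1"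
    using meet i by (simp add: Diff_Int_distrib2 flip: Int_Diff)
  have "b - {i} \<in> derived_blocks B i" "b' - {i} \<in> derived_blocks B i"
    unfolding derived_blocks_def using \<open>b \<in> B\<close> \<open>b' \<in> B\<close> i by blast+
  then have "F i (b - {i}) \<noteq> F i (b' - {i})"
    using F distinct meet_one unfolding block_colouring_def by fastforce
  moreover have "i < n"
    using i \<open>b \<subseteq> {0..<n}\<close> by auto
  ultimately show ?thesis
    using i by (simp add: nth_block_word)
qed

lemma code_of_steiner:
  assumes S: "steiner 3 w n {0..<n} B"
    and chi_less: "\<And>p. p < n \<Longrightarrow> chi 2 (derived_blocks B p) < q"
  shows "\<exists>C. is_code q n w (2 * w - 2) (card B) C"
proof -
  have "\<forall>p. \<exists>f. block_colouring 2 (derived_blocks B p) (chi 2 (derived_blocks B p)) f"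
    using block_colouring_chi[OF finite_derived_blocks[OF finite_steiner_blocks[OF S]]] by metis
  then obtain F where F: "\<And>p. block_colouring 2 (derived_blocks B p) (chi 2 (derived_blocks B p)) (F p)"
    by metis
  let ?word = "block_word F n"
  have blocks: "b \<subseteq> {0..<n}" "card b = w" if "b \<in> B" for b
    using steiner_blocks(3,4)[OF S that] by simp_all
  have word_J: "?word b \<in> J q n w" if "b \<in> B" for b
  proof -
    have colour_less: "F i (b - {i}) < chi 2 (derived_blocks B i)" if "i \<in> b" for i
      using F[of i] \<open>b \<in> B\<close> that unfolding block_colouring_def derived_blocks_def by blast
    have "?word b ! i < q" if "i < n" for i
      using chi_less[OF that] colour_less[of i] by (auto simp: nth_block_word[OF that])
    then have "set (?word b) \<subseteq> {0..<q}"
      by (auto simp: in_set_conv_nth)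
    moreover have "wt (?word b) = w"
      using supp_block_word[OF blocks(1)] blocks(2) that unfolding wt_def supp_def by simp
    ultimately show ?thesis
      unfolding J_def by simp
  qed
  have dist: "2 * w - 2 \<le> hdist (?word b) (?word b')" if "b \<in> B" "b' \<in> B" "b \<noteq> b'" for b b'
  proof -
    have "?word b ! i \<noteq> ?word b' ! i" if "card (b \<inter> b') = 2" "i \<in> b \<inter> b'" for i
      using block_word_nth_neq[where F = F, OF F \<open>b \<in> B\<close> \<open>b' \<in> B\<close> \<open>b \<noteq> b'\<close>
          blocks(1)[OF \<open>b \<in> B\<close>] that] .
    with steiner_card_Int_less[OF S that] show ?thesis
      by (simp add: constant_weight_dist_ge_iff[OF word_J[OF \<open>b \<in> B\<close>] word_J[OF \<open>b' \<in> B\<close>]]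
          supp_block_word[OF blocks(1)] that)
  qed
  have "inj_on ?word B"
    by (metis inj_onI supp_block_word blocks(1))
  then have "is_code q n w (2 * w - 2) (card B) (?word ` B)"
    unfolding is_code_def using word_J dist finite_steiner_blocks[OF S] by (auto simp: card_image)
  then show ?thesis by blast
qed

lemma code_exists_iff_steiner:
  assumes "3 \<le> w" "w < n" and M: "M * (w choose 3) = n choose 3"
  shows "(\<exists>C. is_code q n w (2 * w - 2) M C) \<longleftrightarrow>
    (\<exists>B. steiner 3 w n {0..<n} B \<and> (\<forall>p<n. chi 2 (derived_blocks B p) < q))"
proof
  assume "\<exists>C. is_code q n w (2 * w - 2) M C"
  then obtain C where C: "is_code q n w (2 * w - 2) M C" ..
  have "0 < M"
    using M assms(1,2) by (metis gr0I mult_0 binomial_eq_0_iff le_less_trans not_less less_imp_le)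
  then have "C \<noteq> {}"
    using C unfolding is_code_def by auto
  then show "\<exists>B. steiner 3 w n {0..<n} B \<and> (\<forall>p<n. chi 2 (derived_blocks B p) < q)"
    using steiner_of_code[OF assms(1) C M] chi_derived_blocks_code_less[OF assms(1) C] by blast
next
  assume "\<exists>B. steiner 3 w n {0..<n} B \<and> (\<forall>p<n. chi 2 (derived_blocks B p) < q)"
  then obtain B where B: "steiner 3 w n {0..<n} B" "\<forall>p<n. chi 2 (derived_blocks B p) < q"
    by blast
  have "0 < w choose 3"
    using assms(1) by simp
  then have "card B = M"
    using steiner_card_blocks[OF B(1)] M by (metis mult_right_cancel not_gr0)
  with code_of_steiner[OF B(1)] B(2) show "\<exists>C. is_code q n w (2 * w - 2) M C"
    by blast
qed

lemma Least_exists_le_eq_Min: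
  fixes g :: "'a \<Rightarrow> nat"
  assumes "finite S" "S \<noteq> {}"
  shows "(LEAST q. \<exists>x\<in>S. g x \<le> q) = Min (g ` S)"
proof (rule Least_equality)
  have "Min (g ` S) \<in> g ` S"
    using assms by simp
  then show "\<exists>x\<in>S. g x \<le> Min (g ` S)"
    by auto
  show "Min (g ` S) \<le> q" if "\<exists>x\<in>S. g x \<le> q" for q
    using that Min_le[of "g ` S"] assms(1) by (meson finite_imageI image_eqI le_trans)
qed

theorem mainTheorem9:
  fixes w n :: nat
  assumes "3 \<le> w" and "w < n"
    and "\<exists>B :: nat set set. steiner 3 w n {0..<n} B"
  shows "q0' 3 w n =
    Min {Max ((\<lambda>x. chi 2 (derived_blocks B x)) ` {0..<n}) + 1 | B :: nat set set.
           steiner 3 w n {0..<n} B}"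
proof -
  define S where "S = {B :: nat set set. steiner 3 w n {0..<n} B}"
  define g where "g B = Max ((\<lambda>x. chi 2 (derived_blocks B x)) ` {0..<n}) + 1" for B
  define M where "M = (n choose 3) div (w choose 3)"
  obtain B0 where B0: "B0 \<in> S"
    using assms(3) unfolding S_def by blast
  then have M: "M * (w choose 3) = n choose 3"
    using card_steiner_blocks_eq steiner_card_blocks assms(1) unfolding S_def M_def by fastforce
  have g_le: "g B \<le> q \<longleftrightarrow> (\<forall>p<n. chi 2 (derived_blocks B p) < q)" for B q
    unfolding g_def using assms(2) by (auto simp: Suc_le_eq)
  have "2 * w - 3 + 1 = 2 * w - 2"
    using assms(1) by simp
  then have "q0' 3 w n = (LEAST q. \<exists>B\<in>S. g B \<le> q)"
    unfolding q0'_def M_def[symmetric]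
    by (simp only: code_exists_iff_steiner[OF assms(1,2) M] g_le S_def Bex_def mem_Collect_eq)
  also have "\<dots> = Min (g ` S)"
    using finite_steiner_systems B0 unfolding S_def by (intro Least_exists_le_eq_Min) auto
  finally show ?thesis
    unfolding S_def g_def by (simp add: setcompr_eq_image)
qed

end
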